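(* Let $X$ be a locally compact Hausdorff totally disconnected topological space, $G$ a discrete group, $K$ a field, and $\phi=(\phi_g,X_g,X)_{g\in G}$ a partial action of $G$ on $X$ with every $X_g$ clopen. Then $V\mapsto A_K(\mathcal{G}_V)$ is a bijection between the open invariant subsets $V$ of $X$ and the graded ideals of the Steinberg algebra $A_K(\mathcal{G}_X)$.
   Context: A partial action of $G$ (identity $\varepsilon$) on a topological space $X$ is $(\phi_g,X_g,X)_{g\in G}$ with $X_g$ open, homeomorphisms $\phi_g:X_{g^{-1}}\to X_g$, and (i) $X_\varepsilon=X$, $\phi_\varepsilon=\operatorname{id}$; (ii) $\phi_g(X_{g^{-1}}\cap X_h)=X_g\cap X_{gh}$; (iii) $\phi_g\phi_h(x)=\phi_{gh}(x)$ for $x\in X_{h^{-1}}\cap X_{h^{-1}g^{-1}}$. $V\subseteq X$ is invariant if $\phi_{g^{-1}}(X_g\cap V)\subseteq X_{g^{-1}}\cap V$ for all $g$. The groupoid $\mathcal{G}_X=\bigcup_g\{g\}\times X_g\subseteq G\times X$ (product topology) has range $r(g,x)=x$, domain $d(g,x)=\phi_{g^{-1}}(x)$, composition $(g,x)(h,y)=(gh,x)$ if $y=\phi_{g^{-1}}(x)$, inverse $(g^{-1},\phi_{g^{-1}}(x))$, and is $G$-graded by $(g,x)\mapsto g$; for open invariant $V$, $\mathcal{G}_V=\bigcup_g\{g\}\times(V\cap X_g)$ is an open subgroupoid, and $A_K(\mathcal{G}_V)$ is identified with the functions in $A_K(\mathcal{G}_X)$ supported in $\mathcal{G}_V$. The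 Steinberg algebra $A_K(\mathcal{H})$ consists of compactly supported locally constant functions $\mathcal{H}\to K$ with convolution $(f*g)(\gamma)=\sum_{\alpha\beta=\gamma}f(\alpha)g(\beta)$, graded by supports in $\{g\}\times X_g$. *)

theory Defs
  imports "HOL-Analysis.Analysis"
begin

text \<open>The group G is a type of class group_add (group operation written +,
 identity 0, inverse uminus; not assumed commutative), carrying the discrete
 topology. The space X is the whole type 'x with its type-class topology.\<close>

definition totally_disconnected_space :: "'x::topological_space itself \<Rightarrow> bool" where
  "totally_disconnected_space _ \<longleftrightarrow> (\<forall>S::'x set. connected S \<longrightarrow> (\<exists>a. S \<subseteq> {a}))"

definition partial_action :: "('g::group_add \<Rightarrow> 'x::topological_space \<Rightarrow> 'x) \<Rightarrow> ('g \<Rightarrow> 'x set) \<Rightarrow> bool" where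
  "partial_action \<phi> Xd \<longleftrightarrow>
     (\<forall>g. open (Xd g)) \<and>
     (\<forall>g. \<exists>\<psi>. homeomorphism (Xd (- g)) (Xd g) (\<phi> g) \<psi>) \<and>
     Xd 0 = UNIV \<and> (\<forall>x. \<phi> 0 x = x) \<and>
     (\<forall>g h. \<phi> g ` (Xd (- g) \<inter> Xd h) = Xd g \<inter> Xd (g + h)) \<and>
     (\<forall>g h x. x \<in> Xd (- h) \<inter> Xd (- h + - g) \<longrightarrow> \<phi> g (\<phi> h x) = \<phi> (g + h) x)"

definition invariant_set :: "('g::group_add \<Rightarrow> 'x \<Rightarrow> 'x) \<Rightarrow> ('g \<Rightarrow> 'x set) \<Rightarrow> 'x set \<Rightarrow> bool" where
  "invariant_set \<phi> Xd V \<longleftrightarrow> (\<forall>g. \<phi> (- g) ` (Xd g \<inter> V) \<subseteq> Xd (- g) \<inter> V)"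

text \<open>The groupoid G_V (G_X is the case V = UNIV) as a subset of G \<times> X.\<close>
definition groupoid :: "('g \<Rightarrow> 'x set) \<Rightarrow> 'x set \<Rightarrow> ('g \<times> 'x) set" where
  "groupoid Xd V = {(g, x). x \<in> V \<inter> Xd g}"

definition grp_range :: "'g \<times> 'x \<Rightarrow> 'x" where "grp_range \<gamma> = snd \<gamma>"
definition grp_dom :: "('g::group_add \<Rightarrow> 'x \<Rightarrow> 'x) \<Rightarrow> 'g \<times> 'x \<Rightarrow> 'x" where
  "grp_dom \<phi> \<gamma> = \<phi> (- fst \<gamma>) (snd \<gamma>)"
definition grp_mult :: "'g::group_add \<times> 'x \<Rightarrow> 'g \<times> 'x \<Rightarrow> 'g \<times> 'x" where
  "grp_mult \<alpha> \<beta> = (fst \<alpha> + fst \<beta>, snd \<alpha>)"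

definition GX_topology :: "('g \<times> 'x::topological_space) topology" where
  "GX_topology = prod_topology (discrete_topology UNIV) euclidean"

text \<open>Steinberg algebra A_K(G_V): functions on G_X (extended by 0 outside),
 locally constant on G_V, with compact support contained in G_V.\<close>
definition steinberg :: "('g::group_add \<Rightarrow> 'x set) \<Rightarrow> 'x::topological_space set \<Rightarrow> ('g \<times> 'x \<Rightarrow> 'k::field) set" where
  "steinberg Xd V = {f.
     (\<forall>\<gamma>. \<gamma> \<notin> groupoid Xd V \<longrightarrow> f \<gamma> = 0) \<and>
     (\<forall>\<gamma>\<in>groupoid Xd V. \<exists>W. openin GX_topology W \<and> \<gamma> \<in> W \<and> W \<subseteq> groupoid Xd V \<and>
                              (\<forall>\<delta>\<in>W. f \<delta> = f \<gamma>)) \<and>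
     compactin GX_topology {\<gamma>. f \<gamma> \<noteq> 0}}"

text \<open>Convolution: sum over composable pairs \<alpha>\<beta> = \<gamma> in G_X
 (terms with a zero factor omitted, which does not change the sum).\<close>
definition convolution :: "('g::group_add \<Rightarrow> 'x \<Rightarrow> 'x) \<Rightarrow> ('g \<Rightarrow> 'x set) \<Rightarrow> ('g \<times> 'x \<Rightarrow> 'k::field) \<Rightarrow> ('g \<times> 'x \<Rightarrow> 'k) \<Rightarrow> 'g \<times> 'x \<Rightarrow> 'k" where
  "convolution \<phi> Xd f h \<gamma> =
     (\<Sum>(\<alpha>, \<beta>) \<in> {(\<alpha>, \<beta>). \<alpha> \<in> groupoid Xd UNIV \<and> \<beta> \<in> groupoid Xd UNIV \<and>
                       grp_dom \<phi> \<alpha> = grp_range \<beta> \<and> grp_mult \<alpha> \<beta> = \<gamma> \<and> f \<alpha> \<noteq> 0 \<and> h \<beta> \<noteq> 0}.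
        f \<alpha> * h \<beta>)"

definition hom_component :: "'g \<Rightarrow> ('g \<times> 'x \<Rightarrow> 'k::zero) \<Rightarrow> 'g \<times> 'x \<Rightarrow> 'k" where
  "hom_component g f = (\<lambda>\<gamma>. if fst \<gamma> = g then f \<gamma> else 0)"

definition steinberg_ideal :: "('g::group_add \<Rightarrow> 'x \<Rightarrow> 'x) \<Rightarrow> ('g \<Rightarrow> 'x::topological_space set) \<Rightarrow> ('g \<times> 'x \<Rightarrow> 'k::field) set \<Rightarrow> bool" where
  "steinberg_ideal \<phi> Xd I \<longleftrightarrow>
     I \<subseteq> steinberg Xd UNIV \<and> (\<lambda>_. 0) \<in> I \<and>
     (\<forall>f\<in>I. \<forall>h\<in>I. (\<lambda>\<gamma>. f \<gamma> + h \<gamma>) \<in> I) \<and> (\<forall>f\<in>I. (\<lambda>\<gamma>. - f \<gamma>) \<in> I) \<and>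
     (\<forall>f\<in>I. \<forall>a\<in>steinberg Xd UNIV. convolution \<phi> Xd a f \<in> I \<and> convolution \<phi> Xd f a \<in> I)"

text \<open>Graded ideal: I = \<Oplus>_g (I \<inter> A_g), i.e. every homogeneous component of an
 element of I lies in I.\<close>
definition graded_ideal :: "('g::group_add \<Rightarrow> 'x \<Rightarrow> 'x) \<Rightarrow> ('g \<Rightarrow> 'x::topological_space set) \<Rightarrow> ('g \<times> 'x \<Rightarrow> 'k::field) set \<Rightarrow> bool" where
  "graded_ideal \<phi> Xd I \<longleftrightarrow> steinberg_ideal \<phi> Xd I \<and> (\<forall>f\<in>I. \<forall>g. hom_component g f \<in> I)"

end

theory Submission
  imports Defs
begin

text \<open>Because \<open>G\<close> is discrete, an element of \<open>A_K(G_X)\<close> is a finite sum of homogeneous pieces, each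
  a locally constant compactly supported function on one fibre \<open>{g} \<times> X_g\<close>. For an open invariant
  \<open>V\<close>, convolution cannot leave \<open>G_V\<close>, since the source \<open>\<phi> (- a) x\<close> of an arrow lies in \<open>V\<close>
  exactly when its range \<open>x\<close> does; so \<open>A_K(G_V)\<close> is a graded ideal, and different \<open>V\<close> are
  separated by characteristic functions of compact open sets, which exist because \<open>X\<close> is
  zero-dimensional. Conversely a graded ideal \<open>I\<close> determines the open invariant set \<open>V\<close> of units
  \<open>x\<close> with \<open>f (0, x) \<noteq> 0\<close> for some \<open>f \<in> I\<close>. Clearly \<open>I \<subseteq> A_K(G_V)\<close>; for the converse, inverting
  the unit part of elements of \<open>I\<close> yields local units in \<open>I\<close> equal to \<open>1\<close> on any compact subset
  of \<open>V\<close>, and such a unit is a right unit for a homogeneous element of \<open>A_K(G_V)\<close>.\<close>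

section \<open>Topology of \<open>G \<times> X\<close> and locally constant functions\<close>

lemma openin_GX_topology_iff:
  "openin (GX_topology :: ('g \<times> 'x::topological_space) topology) W \<longleftrightarrow> (\<forall>g. open {x. (g, x) \<in> W})"
proof
  assume H: "openin GX_topology W"
  show "\<forall>g. open {x. (g, x) \<in> W}"
  proof (intro allI)
    fix g
    show "open {x. (g, x) \<in> W}"
    proof (rule Topological_Spaces.openI)
      fix x assume "x \<in> {x. (g, x) \<in> W}"
      then have "(g, x) \<in> W" by simp
      then obtain U V where UV: "openin (discrete_topology UNIV) U" "openin euclidean V" "g \<in> U" "x \<in> V" "U \<times> V \<subseteq> W"
        using H unfolding GX_topology_def openin_prod_topology_alt by meson
      then show "\<exists>T. open T \<and> x \<in> T \<and> T \<subseteq> {x. (g, x) \<in> W}"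
        by (intro exI[of _ V]) auto
    qed
  qed
next
  assume H: "\<forall>g. open {x. (g, x) \<in> W}"
  show "openin GX_topology W"
    unfolding GX_topology_def openin_prod_topology_alt
  proof (intro allI impI)
    fix g x assume "(g, x) \<in> W"
    then show "\<exists>U V. openin (discrete_topology UNIV) U \<and> openin euclidean V \<and> g \<in> U \<and> x \<in> V \<and> U \<times> V \<subseteq> W"
      using H by (intro exI[of _ "{g}"] exI[of _ "{x. (g, x) \<in> W}"]) auto
  qed
qed

lemma compactin_GX_topology_iff:
  "compactin (GX_topology :: ('g \<times> 'x::topological_space) topology) S \<longleftrightarrow>
     finite (fst ` S) \<and> (\<forall>g. compact {x. (g, x) \<in> S})"
proof
  assume H: "compactin GX_topology S"
  have "compactin (discrete_topology UNIV) (fst ` S)"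
    using H unfolding GX_topology_def by (rule image_compactin) (rule continuous_map_fst)
  then have "finite (fst ` S)" by (simp add: compactin_discrete_topology)
  moreover have "compact {x. (g, x) \<in> S}" for g
  proof -
    have "closedin GX_topology ({g} \<times> UNIV)"
      unfolding GX_topology_def closedin_prod_Times_iff by simp
    then have "compactin GX_topology (({g} \<times> UNIV) \<inter> S)"
      using H by (rule closed_Int_compactin)
    then have "compactin euclidean (snd ` (({g} \<times> UNIV) \<inter> S))"
      unfolding GX_topology_def by (rule image_compactin) (rule continuous_map_snd)
    moreover have "snd ` (({g} \<times> UNIV) \<inter> S) = {x. (g, x) \<in> S}" by force
    ultimately show ?thesis by simp
  qed
  ultimately show "finite (fst ` S) \<and> (\<forall>g. compact {x. (g, x) \<in> S})" by blast
next
  assume H: "finite (fst ` S) \<and> (\<forall>g. compact {x. (g, x) \<in> S})"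
  have "S = \<Union> ((\<lambda>g. {g} \<times> {x. (g, x) \<in> S}) ` fst ` S)" by force
  moreover have "compactin GX_topology (\<Union> ((\<lambda>g. {g} \<times> {x. (g, x) \<in> S}) ` fst ` S))"
    using H by (intro compactin_Union) (auto simp: GX_topology_def compactin_Times)
  ultimately show "compactin GX_topology S" by simp
qed

definition locally_constant :: "('a::topological_space \<Rightarrow> 'b) \<Rightarrow> bool" where
  "locally_constant u \<longleftrightarrow> (\<forall>x. \<exists>W. open W \<and> x \<in> W \<and> (\<forall>y\<in>W. u y = u x))"

lemma locally_constant_const: "locally_constant (\<lambda>x. c)"
  unfolding locally_constant_def by (intro allI exI[of _ UNIV]) simp

lemma locally_constant_binop:
  assumes "locally_constant u" "locally_constant v"
  shows "locally_constant (\<lambda>x. F (u x) (v x))"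
  unfolding locally_constant_def
proof
  fix x
  obtain W1 where "open W1" "x \<in> W1" "\<forall>y\<in>W1. u y = u x"
    using assms(1) unfolding locally_constant_def by blast
  moreover obtain W2 where "open W2" "x \<in> W2" "\<forall>y\<in>W2. v y = v x"
    using assms(2) unfolding locally_constant_def by blast
  ultimately show "\<exists>W. open W \<and> x \<in> W \<and> (\<forall>y\<in>W. F (u y) (v y) = F (u x) (v x))"
    by (metis IntD1 IntD2 IntI open_Int)
qed

lemma locally_constant_comp: "locally_constant u \<Longrightarrow> locally_constant (\<lambda>x. F (u x))"
  using locally_constant_binop[of u u "\<lambda>a b. F a"] by simp

lemma locally_constant_sum:
  "finite A \<Longrightarrow> (\<And>a. a \<in> A \<Longrightarrow> locally_constant (u a)) \<Longrightarrow>
     locally_constant (\<lambda>x. \<Sum>a\<in>A. u a x :: 'b::comm_monoid_add)"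
proof (induction A rule: finite_induct)
  case empty
  then show ?case by (simp add: locally_constant_const)
next
  case (insert b B)
  then show ?case
    using locally_constant_binop[of "u b" "\<lambda>x. \<Sum>a\<in>B. u a x" "(+)"] by simp
qed

lemma open_vimage_locally_constant:
  assumes "locally_constant u"
  shows "open (u -` S)"
proof (rule Topological_Spaces.openI)
  fix x assume "x \<in> u -` S"
  moreover obtain W where "open W" "x \<in> W" "\<forall>y\<in>W. u y = u x"
    using assms unfolding locally_constant_def by blast
  ultimately show "\<exists>T. open T \<and> x \<in> T \<and> T \<subseteq> u -` S"
    by (metis subsetI vimageE vimageI)
qed

lemma closed_vimage_locally_constant: "locally_constant u \<Longrightarrow> closed (u -` S)"
  unfolding closed_def vimage_Compl[symmetric] by (rule open_vimage_locally_constant)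

lemma compact_support_locally_constant:
  assumes "locally_constant u" "{x. u x \<noteq> c} \<subseteq> K" "compact K"
  shows "compact {x. u x \<noteq> c}"
proof -
  have "{x. u x \<noteq> c} = K \<inter> u -` (- {c})" using assms(2) by blast
  then show ?thesis
    using assms by (simp add: compact_Int_closed closed_vimage_locally_constant)
qed

text \<open>The factor \<open>u\<close> kills the points outside \<open>A\<close>, where \<open>p\<close> need not be continuous.\<close>
lemma locally_constant_mult_comp:
  fixes u v :: "'a::topological_space \<Rightarrow> 'k::mult_zero"
  assumes "locally_constant u" "locally_constant v" "open A" "continuous_on A p"
    and "\<And>x. x \<notin> A \<Longrightarrow> u x = 0"
  shows "locally_constant (\<lambda>x. u x * v (p x))"
  unfolding locally_constant_def
proof
  fix x
  obtain W1 where W1: "open W1" "x \<in> W1" "\<forall>y\<in>W1. u y = u x"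
    using assms(1) unfolding locally_constant_def by blast
  show "\<exists>W. open W \<and> x \<in> W \<and> (\<forall>y\<in>W. u y * v (p y) = u x * v (p x))"
  proof (cases "x \<in> A")
    case True
    obtain W2 where W2: "open W2" "p x \<in> W2" "\<forall>y\<in>W2. v y = v (p x)"
      using assms(2) unfolding locally_constant_def by blast
    have "open (W1 \<inter> (A \<inter> p -` W2))"
      using assms(3,4) W1(1) W2(1) by (simp add: continuous_on_open_vimage Int_commute open_Int)
    moreover have "\<forall>y\<in>W1 \<inter> (A \<inter> p -` W2). u y * v (p y) = u x * v (p x)"
      using W1(3) W2(3) by (metis Int_iff vimageE)
    ultimately show ?thesis using W1(2) W2(2) True by blast
  next
    case False
    then have "\<forall>y\<in>W1. u y * v (p y) = u x * v (p x)" using W1(3) assms(5) by (metis mult_zero_left)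
    then show ?thesis using W1(1,2) by blast
  qed
qed

lemma locally_constant_clopen_indicator:
  assumes "open C" "closed C"
  shows "locally_constant (\<lambda>x. if x \<in> C then a else b)"
  unfolding locally_constant_def
proof
  fix x
  show "\<exists>W. open W \<and> x \<in> W \<and> (\<forall>y\<in>W. (if y \<in> C then a else b) = (if x \<in> C then a else b))"
  proof (cases "x \<in> C")
    case True
    then show ?thesis using assms(1) by (intro exI[of _ C]) simp
  next
    case False
    then show ?thesis using assms(2) by (intro exI[of _ "- C"]) (simp add: open_Compl)
  qed
qed

text \<open>By Wilder's theorem a compact component, here a singleton, has clopen neighbourhoods inside
  any given neighbourhood.\<close>
lemma compact_open_nbhd:
  fixes x :: "'x::t2_space"
  assumes "locally_compact_space (euclidean :: 'x topology)"
    and "totally_disconnected_space TYPE('x)"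
    and "open Q" "x \<in> Q"
  obtains C where "compact C" "open C" "x \<in> C" "C \<subseteq> Q"
proof -
  obtain U K where UK: "open U" "compact K" "x \<in> U" "U \<subseteq> K"
    using assms(1) unfolding locally_compact_space_def
    by (metis UNIV_I compactin_euclidean_iff open_openin topspace_euclidean)
  have "connected (connected_component_of_set euclidean x)"
    using connectedin_connected_component_of[of euclidean x] by simp
  then obtain a where "connected_component_of_set euclidean x \<subseteq> {a}"
    using assms(2) unfolding totally_disconnected_space_def by blast
  then have "connected_component_of_set euclidean x = {x}"
    using connected_component_of_refl[of euclidean x] by auto
  then have component: "{x} \<in> connected_components_of euclidean"
    unfolding connected_components_of_def by (intro image_eqI[of _ _ x]) simp_all
  have Hausdorff: "Hausdorff_space (euclidean :: 'x topology)"
    unfolding Hausdorff_space_def disjnt_def by (metis hausdorff open_openin)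
  have W: "openin euclidean (U \<inter> Q)" "{x} \<subseteq> U \<inter> Q"
    using UK(1,3) assms(3,4) by auto
  obtain U' V' where UV: "openin euclidean U'" "openin euclidean V'" "disjnt U' V'"
      "U' \<union> V' = topspace euclidean" "{x} \<subseteq> U'" "U' \<subseteq> U \<inter> Q"
    by (rule wilder_locally_compact_component_thm[OF assms(1) Hausdorff component _ W]) simp
  have "U' = - V'" using UV(3,4) by (auto simp: disjnt_def)
  then have "closed U'" using UV(2) by (simp add: closed_Compl)
  then have "compact (K \<inter> U')" using UK(2) by (intro compact_Int_closed)
  moreover have "K \<inter> U' = U'" using UV(6) UK(4) by blast
  ultimately have "compact U'" by simp
  moreover have "open U'" "x \<in> U'" "U' \<subseteq> Q" using UV(1,5,6) by auto
  ultimately show ?thesis using that by blast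
qed

section \<open>Partial actions\<close>

locale partial_action_system =
  fixes \<phi> :: "'g::group_add \<Rightarrow> 'x::topological_space \<Rightarrow> 'x" and Xd :: "'g \<Rightarrow> 'x set"
  assumes partial_action: "partial_action \<phi> Xd"
begin

lemma open_domain: "open (Xd g)"
  using partial_action unfolding partial_action_def by blast

lemma domain_zero: "Xd 0 = UNIV"
  using partial_action unfolding partial_action_def by blast

lemma act_zero: "\<phi> 0 x = x"
  using partial_action unfolding partial_action_def by blast

lemma homeomorphism_act_inverse: "\<exists>\<psi>. homeomorphism (Xd g) (Xd (- g)) (\<phi> (- g)) \<psi>"
  using partial_action unfolding partial_action_def by (metis minus_minus)

lemma act_inverse_in_domain: "x \<in> Xd g \<Longrightarrow> \<phi> (- g) x \<in> Xd (- g)"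
  using homeomorphism_act_inverse[of g] unfolding homeomorphism_def by blast

lemma continuous_on_act_inverse: "continuous_on (Xd g) (\<phi> (- g))"
  using homeomorphism_act_inverse[of g] unfolding homeomorphism_def by blast

lemma act_act_inverse:
  assumes "x \<in> Xd g"
  shows "\<phi> g (\<phi> (- g) x) = x"
proof -
  have "x \<in> Xd (- (- g)) \<inter> Xd (- (- g) + - g)" using assms domain_zero by simp
  then have "\<phi> g (\<phi> (- g) x) = \<phi> (g + - g) x"
    using partial_action unfolding partial_action_def by blast
  then show ?thesis by (simp add: act_zero)
qed

lemma in_domain_add:
  assumes "x \<in> Xd g" "\<phi> (- g) x \<in> Xd h"
  shows "x \<in> Xd (g + h)"
proof -
  have "\<phi> g ` (Xd (- g) \<inter> Xd h) = Xd g \<inter> Xd (g + h)"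
    using partial_action unfolding partial_action_def by blast
  moreover have "\<phi> (- g) x \<in> Xd (- g) \<inter> Xd h" using act_inverse_in_domain assms by simp
  ultimately have "\<phi> g (\<phi> (- g) x) \<in> Xd (g + h)" by blast
  then show ?thesis using act_act_inverse[OF assms(1)] by simp
qed

lemma invariant_set_act_inverse_iff:
  assumes "invariant_set \<phi> Xd V" "x \<in> Xd g"
  shows "\<phi> (- g) x \<in> V \<longleftrightarrow> x \<in> V"
proof
  assume "\<phi> (- g) x \<in> V"
  then have "\<phi> (- (- g)) (\<phi> (- g) x) \<in> V"
    using assms act_inverse_in_domain unfolding invariant_set_def by blast
  then show "x \<in> V" using act_act_inverse[OF assms(2)] by simp
next
  assume "x \<in> V"
  then show "\<phi> (- g) x \<in> V" using assms unfolding invariant_set_def by blast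
qed

end

section \<open>Fibrewise description of Steinberg algebras\<close>

text \<open>Membership in \<open>steinberg Xd V\<close> for open \<open>V\<close>, read off fibre by fibre: with \<open>G\<close> discrete,
  \<open>GX_topology\<close> is the disjoint sum of the fibres \<open>{g} \<times> X\<close>.\<close>
definition fibrewise_steinberg :: "('g \<Rightarrow> 'x::topological_space set) \<Rightarrow> 'x set \<Rightarrow> ('g \<times> 'x \<Rightarrow> 'k::zero) \<Rightarrow> bool" where
  "fibrewise_steinberg Xd V f \<longleftrightarrow>
     (\<forall>g x. x \<notin> V \<inter> Xd g \<longrightarrow> f (g, x) = 0) \<and> (\<forall>g. locally_constant (\<lambda>x. f (g, x))) \<and>
     finite {g. \<exists>x. f (g, x) \<noteq> 0} \<and> (\<forall>g. compact {x. f (g, x) \<noteq> 0})"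

lemma fibrewise_steinberg_if_steinberg:
  fixes Xd :: "'g::group_add \<Rightarrow> 'x::t2_space set"
  assumes f: "f \<in> steinberg Xd V"
  shows "fibrewise_steinberg Xd V (f :: 'g \<times> 'x \<Rightarrow> 'k::field)"
proof -
  have vanish: "\<forall>g x. x \<notin> V \<inter> Xd g \<longrightarrow> f (g, x) = 0"
    using f unfolding steinberg_def groupoid_def by auto
  have "compactin GX_topology {\<gamma>. f \<gamma> \<noteq> 0}" using f unfolding steinberg_def by blast
  then have "finite (fst ` {\<gamma>. f \<gamma> \<noteq> 0})" and compact: "\<And>g. compact {x. f (g, x) \<noteq> 0}"
    unfolding compactin_GX_topology_iff by auto
  moreover have "{g. \<exists>x. f (g, x) \<noteq> 0} = fst ` {\<gamma>. f \<gamma> \<noteq> 0}" by force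
  moreover have "locally_constant (\<lambda>x. f (g, x))" for g
    unfolding locally_constant_def
  proof
    fix x
    show "\<exists>W. open W \<and> x \<in> W \<and> (\<forall>y\<in>W. f (g, y) = f (g, x))"
    proof (cases "f (g, x) = 0")
      case True
      have "open (- {x. f (g, x) \<noteq> 0})" using compact compact_imp_closed by blast
      with True show ?thesis by (intro exI[of _ "- {x. f (g, x) \<noteq> 0}"]) simp
    next
      case False
      then have "(g, x) \<in> groupoid Xd V" using vanish by (auto simp: groupoid_def)
      then obtain W where W: "openin GX_topology W" "(g, x) \<in> W" "\<forall>\<delta>\<in>W. f \<delta> = f (g, x)"
        using f unfolding steinberg_def by blast
      have "open {y. (g, y) \<in> W}" using W(1) unfolding openin_GX_topology_iff by blast
      with W(2,3) show ?thesis by blast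
    qed
  qed
  ultimately show ?thesis
    unfolding fibrewise_steinberg_def using vanish by simp
qed

lemma steinberg_if_fibrewise_steinberg:
  fixes Xd :: "'g::group_add \<Rightarrow> 'x::topological_space set"
  assumes "\<And>g. open (Xd g)" "open V" and f: "fibrewise_steinberg Xd V f"
  shows "f \<in> steinberg Xd V"
proof -
  have vanish: "\<forall>\<gamma>. \<gamma> \<notin> groupoid Xd V \<longrightarrow> f \<gamma> = 0"
    using f unfolding fibrewise_steinberg_def groupoid_def by auto
  have "\<exists>W. openin GX_topology W \<and> \<gamma> \<in> W \<and> W \<subseteq> groupoid Xd V \<and> (\<forall>\<delta>\<in>W. f \<delta> = f \<gamma>)"
    if "\<gamma> \<in> groupoid Xd V" for \<gamma>
  proof -
    obtain g x where \<gamma>: "\<gamma> = (g, x)" by (cases \<gamma>)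
    with that have x: "x \<in> V" "x \<in> Xd g" unfolding groupoid_def by auto
    obtain W0 where W0: "open W0" "x \<in> W0" "\<forall>y\<in>W0. f (g, y) = f (g, x)"
      using f unfolding fibrewise_steinberg_def locally_constant_def by blast
    define W where "W = {g} \<times> (W0 \<inter> V \<inter> Xd g)"
    have "{y. (h, y) \<in> W} = (if h = g then W0 \<inter> V \<inter> Xd g else {})" for h
      unfolding W_def by auto
    then have "open {y. (h, y) \<in> W}" for h
      using W0(1) assms by (simp add: open_Int)
    then have "openin GX_topology W" unfolding openin_GX_topology_iff by blast
    moreover have "\<gamma> \<in> W" "W \<subseteq> groupoid Xd V"
      using \<gamma> x W0(2) unfolding W_def groupoid_def by auto
    moreover have "\<forall>\<delta>\<in>W. f \<delta> = f \<gamma>"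
      using \<gamma>(1) W0(3) unfolding W_def by blast
    ultimately show ?thesis by blast
  qed
  moreover have "fst ` {\<gamma>. f \<gamma> \<noteq> 0} = {g. \<exists>x. f (g, x) \<noteq> 0}" by force
  then have "compactin GX_topology {\<gamma>. f \<gamma> \<noteq> 0}"
    using f unfolding compactin_GX_topology_iff fibrewise_steinberg_def by simp
  ultimately show ?thesis unfolding steinberg_def using vanish by blast
qed

lemma steinberg_iff_fibrewise:
  fixes Xd :: "'g::group_add \<Rightarrow> 'x::t2_space set"
  assumes "\<And>g. open (Xd g)" "open V"
  shows "f \<in> steinberg Xd V \<longleftrightarrow> fibrewise_steinberg Xd V (f :: 'g \<times> 'x \<Rightarrow> 'k::field)"
  using fibrewise_steinberg_if_steinberg[of f Xd V] steinberg_if_fibrewise_steinberg[of Xd V f] assms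
  by blast

lemma fibrewise_steinberg_domain:
  "fibrewise_steinberg Xd V f \<Longrightarrow> f (g, x) \<noteq> 0 \<Longrightarrow> x \<in> V \<inter> Xd g"
  unfolding fibrewise_steinberg_def by blast

lemma fibrewise_steinberg_zero: "fibrewise_steinberg Xd V (\<lambda>_. 0)"
  unfolding fibrewise_steinberg_def by (simp add: locally_constant_const)

lemma fibrewise_steinberg_add:
  assumes "fibrewise_steinberg Xd V f" "fibrewise_steinberg Xd V k"
  shows "fibrewise_steinberg Xd V (\<lambda>\<gamma>. f \<gamma> + k \<gamma> :: 'k::comm_monoid_add)"
proof -
  have lc: "locally_constant (\<lambda>x. f (g, x) + k (g, x))" for g
    using assms locally_constant_binop[of "\<lambda>x. f (g, x)" "\<lambda>x. k (g, x)" "(+)"]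
    unfolding fibrewise_steinberg_def by blast
  have "{g. \<exists>x. f (g, x) + k (g, x) \<noteq> 0} \<subseteq> {g. \<exists>x. f (g, x) \<noteq> 0} \<union> {g. \<exists>x. k (g, x) \<noteq> 0}"
    by force
  then have "finite {g. \<exists>x. f (g, x) + k (g, x) \<noteq> 0}"
    using assms unfolding fibrewise_steinberg_def by (meson finite_Un finite_subset)
  moreover have "compact {x. f (g, x) + k (g, x) \<noteq> 0}" for g
  proof (rule compact_support_locally_constant[OF lc])
    show "{x. f (g, x) + k (g, x) \<noteq> 0} \<subseteq> {x. f (g, x) \<noteq> 0} \<union> {x. k (g, x) \<noteq> 0}" by force
    show "compact ({x. f (g, x) \<noteq> 0} \<union> {x. k (g, x) \<noteq> 0})"
      using assms unfolding fibrewise_steinberg_def by (blast intro: compact_Un)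
  qed
  ultimately show ?thesis using assms lc unfolding fibrewise_steinberg_def by simp
qed

lemma fibrewise_steinberg_uminus:
  assumes "fibrewise_steinberg Xd V f"
  shows "fibrewise_steinberg Xd V (\<lambda>\<gamma>. - f \<gamma> :: 'k::ab_group_add)"
  using assms locally_constant_comp[of "\<lambda>x. f (_, x)" uminus]
  unfolding fibrewise_steinberg_def by simp

lemma fibrewise_steinberg_hom_component:
  assumes "fibrewise_steinberg Xd V f"
  shows "fibrewise_steinberg Xd V (hom_component g f)"
proof -
  have "{h. \<exists>x. hom_component g f (h, x) \<noteq> 0} \<subseteq> {g. \<exists>x. f (g, x) \<noteq> 0}"
    unfolding hom_component_def by auto
  then have "finite {h. \<exists>x. hom_component g f (h, x) \<noteq> 0}"
    using assms unfolding fibrewise_steinberg_def by (meson finite_subset)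
  moreover have "locally_constant (\<lambda>x. hom_component g f (h, x))"
    "compact {x. hom_component g f (h, x) \<noteq> 0}" for h
    using assms unfolding fibrewise_steinberg_def hom_component_def
    by (cases "h = g"; simp add: locally_constant_const)+
  ultimately show ?thesis
    using assms unfolding fibrewise_steinberg_def hom_component_def by simp
qed

lemma fibrewise_steinberg_mono:
  "fibrewise_steinberg Xd V f \<Longrightarrow> V \<subseteq> W \<Longrightarrow> fibrewise_steinberg Xd W f"
  unfolding fibrewise_steinberg_def by blast

lemma fibrewise_steinberg_restrict:
  "fibrewise_steinberg Xd W f \<Longrightarrow> (\<And>g x. x \<notin> V \<Longrightarrow> f (g, x) = 0) \<Longrightarrow> fibrewise_steinberg Xd V f"
  unfolding fibrewise_steinberg_def by blast

definition char_fun :: "'g \<Rightarrow> 'x set \<Rightarrow> 'g \<times> 'x \<Rightarrow> 'k::zero_neq_one" where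
  "char_fun g C = (\<lambda>(h, x). if h = g \<and> x \<in> C then 1 else 0)"

lemma char_fun_apply [simp]: "char_fun g C (h, x) = (if h = g \<and> x \<in> C then 1 else 0)"
  unfolding char_fun_def by simp

lemma fibrewise_steinberg_char_fun:
  fixes C :: "'x::t2_space set"
  assumes "compact C" "open C" "C \<subseteq> V \<inter> Xd g"
  shows "fibrewise_steinberg Xd V (char_fun g C :: 'g \<times> 'x \<Rightarrow> 'k::zero_neq_one)"
proof -
  have "locally_constant (\<lambda>x. char_fun g C (h, x) :: 'k)" for h
    using locally_constant_clopen_indicator[OF assms(2) compact_imp_closed[OF assms(1)]]
    by (cases "h = g") (simp_all add: locally_constant_const)
  moreover have "{h. \<exists>x. (char_fun g C (h, x) :: 'k) \<noteq> 0} \<subseteq> {g}" by auto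
  then have "finite {h. \<exists>x. (char_fun g C (h, x) :: 'k) \<noteq> 0}" by (rule finite_subset) simp
  moreover have "{x. (char_fun g C (h, x) :: 'k) \<noteq> 0} = (if h = g then C else {})" for h by auto
  ultimately show ?thesis
    using assms unfolding fibrewise_steinberg_def by auto
qed

lemma convolution_eq_sum:
  fixes f k :: "'g::group_add \<times> 'x \<Rightarrow> 'k::field"
  assumes "finite F" "\<And>a x. f (a, x) \<noteq> 0 \<Longrightarrow> a \<in> F"
    and "\<And>a x. f (a, x) \<noteq> 0 \<Longrightarrow> x \<in> Xd a" "\<And>b y. k (b, y) \<noteq> 0 \<Longrightarrow> y \<in> Xd b"
  shows "convolution \<phi> Xd f k (h, x) = (\<Sum>a\<in>F. f (a, x) * k (- a + h, \<phi> (- a) x))"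
proof -
  define P where "P = {(\<alpha>, \<beta>). \<alpha> \<in> groupoid Xd UNIV \<and> \<beta> \<in> groupoid Xd UNIV \<and>
      grp_dom \<phi> \<alpha> = grp_range \<beta> \<and> grp_mult \<alpha> \<beta> = (h, x) \<and> f \<alpha> \<noteq> 0 \<and> k \<beta> \<noteq> 0}"
  define F' where "F' = {a\<in>F. f (a, x) * k (- a + h, \<phi> (- a) x) \<noteq> 0}"
  define m where "m a = ((a, x), (- a + h, \<phi> (- a) x))" for a
  \<comment> \<open>A composable pair with product \<open>(h, x)\<close> is determined by the degree \<open>a\<close> of its first entry.\<close>
  have P: "P = m ` F'"
  proof
    show "P \<subseteq> m ` F'"
    proof
      fix p assume "p \<in> P"
      then obtain a b y where p: "p = ((a, x), (b, y))" "\<phi> (- a) x = y" "a + b = h"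
          "f (a, x) \<noteq> 0" "k (b, y) \<noteq> 0"
        unfolding P_def groupoid_def grp_dom_def grp_range_def grp_mult_def by auto
      moreover from p(3) have "b = - a + h" by (auto simp: add.assoc[symmetric])
      ultimately show "p \<in> m ` F'" using assms(2) unfolding F'_def m_def by auto
    qed
    show "m ` F' \<subseteq> P"
    proof
      fix p assume "p \<in> m ` F'"
      then obtain a where a: "a \<in> F'" "p = m a" by blast
      then have "f (a, x) \<noteq> 0" "k (- a + h, \<phi> (- a) x) \<noteq> 0" unfolding F'_def by auto
      moreover have "a + (- a + h) = h" by (simp add: add.assoc[symmetric])
      ultimately show "p \<in> P" using a(2) assms(3,4)
        unfolding P_def m_def groupoid_def grp_dom_def grp_range_def grp_mult_def by auto
    qed
  qed
  have "inj_on m F'" unfolding m_def inj_on_def by auto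
  have "convolution \<phi> Xd f k (h, x) = (\<Sum>(\<alpha>, \<beta>)\<in>P. f \<alpha> * k \<beta>)"
    unfolding convolution_def P_def by simp
  also have "\<dots> = (\<Sum>a\<in>F'. f (a, x) * k (- a + h, \<phi> (- a) x))"
    unfolding P by (subst sum.reindex[OF \<open>inj_on m F'\<close>]) (simp add: m_def)
  also have "\<dots> = (\<Sum>a\<in>F. f (a, x) * k (- a + h, \<phi> (- a) x))"
    using assms(1) by (intro sum.mono_neutral_left) (auto simp: F'_def)
  finally show ?thesis .
qed

lemma convolution_homogeneous_left:
  fixes f k :: "'g::group_add \<times> 'x \<Rightarrow> 'k::field"
  assumes "\<And>b y. f (b, y) \<noteq> 0 \<Longrightarrow> b = a \<and> y \<in> Xd a" "\<And>b y. k (b, y) \<noteq> 0 \<Longrightarrow> y \<in> Xd b"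
  shows "convolution \<phi> Xd f k (h, x) = f (a, x) * k (- a + h, \<phi> (- a) x)"
proof -
  have "convolution \<phi> Xd f k (h, x) = (\<Sum>b\<in>{a}. f (b, x) * k (- b + h, \<phi> (- b) x))"
    by (rule convolution_eq_sum) (use assms in auto)
  then show ?thesis by simp
qed

context partial_action_system
begin

lemma convolution_eq_sum_fibrewise:
  fixes f k :: "'g \<times> 'x \<Rightarrow> 'k::field"
  assumes "fibrewise_steinberg Xd UNIV f" "fibrewise_steinberg Xd UNIV k"
  shows "convolution \<phi> Xd f k (h, x) =
    (\<Sum>a\<in>{g. \<exists>x. f (g, x) \<noteq> 0}. f (a, x) * k (- a + h, \<phi> (- a) x))"
  by (rule convolution_eq_sum) (use assms in \<open>auto simp: fibrewise_steinberg_def\<close>)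

lemma convolution_nonzero_witness:
  fixes f k :: "'g \<times> 'x \<Rightarrow> 'k::field"
  assumes "fibrewise_steinberg Xd UNIV f" "fibrewise_steinberg Xd UNIV k"
    and "convolution \<phi> Xd f k (h, x) \<noteq> 0"
  shows "\<exists>a. f (a, x) \<noteq> 0 \<and> k (- a + h, \<phi> (- a) x) \<noteq> 0"
proof -
  obtain a where "f (a, x) * k (- a + h, \<phi> (- a) x) \<noteq> 0"
    using assms(3) unfolding convolution_eq_sum_fibrewise[OF assms(1,2)]
    by (rule sum.not_neutral_contains_not_neutral)
  then show ?thesis by auto
qed

lemma locally_constant_convolution:
  fixes f k :: "'g \<times> 'x \<Rightarrow> 'k::field"
  assumes f: "fibrewise_steinberg Xd UNIV f" and k: "fibrewise_steinberg Xd UNIV k"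
  shows "locally_constant (\<lambda>x. convolution \<phi> Xd f k (h, x))"
  unfolding convolution_eq_sum_fibrewise[OF f k]
proof (rule locally_constant_sum)
  show "finite {g. \<exists>x. f (g, x) \<noteq> 0}" using f unfolding fibrewise_steinberg_def by blast
  fix a
  show "locally_constant (\<lambda>x. f (a, x) * k (- a + h, \<phi> (- a) x))"
  proof (rule locally_constant_mult_comp[of "\<lambda>x. f (a, x)" "\<lambda>y. k (- a + h, y)" "Xd a"])
    show "locally_constant (\<lambda>x. f (a, x))" "locally_constant (\<lambda>y. k (- a + h, y))"
      using f k unfolding fibrewise_steinberg_def by blast+
    show "\<And>x. x \<notin> Xd a \<Longrightarrow> f (a, x) = 0"
      using fibrewise_steinberg_domain[OF f] by blast
  qed (rule open_domain, rule continuous_on_act_inverse)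
qed

lemma fibrewise_steinberg_convolution:
  fixes f k :: "'g \<times> 'x \<Rightarrow> 'k::field"
  assumes f: "fibrewise_steinberg Xd UNIV f" and k: "fibrewise_steinberg Xd UNIV k"
  shows "fibrewise_steinberg Xd UNIV (convolution \<phi> Xd f k)"
proof -
  define F where "F = {g. \<exists>x. f (g, x) \<noteq> 0}"
  define Fk where "Fk = {g. \<exists>x. k (g, x) \<noteq> 0}"
  have "finite F" "finite Fk" using f k unfolding fibrewise_steinberg_def F_def Fk_def by auto
  have domain: "x \<in> Xd h" if nonzero: "convolution \<phi> Xd f k (h, x) \<noteq> 0" for h x
  proof -
    obtain a where a: "f (a, x) \<noteq> 0" "k (- a + h, \<phi> (- a) x) \<noteq> 0"
      using convolution_nonzero_witness[OF f k nonzero] by blast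
    have "x \<in> Xd (a + (- a + h))"
      using in_domain_add fibrewise_steinberg_domain[OF f a(1)] fibrewise_steinberg_domain[OF k a(2)]
      by blast
    then show ?thesis by (simp add: add.assoc[symmetric])
  qed
  have lc: "locally_constant (\<lambda>x. convolution \<phi> Xd f k (h, x))" for h
    by (rule locally_constant_convolution[OF f k])
  have "{h. \<exists>x. convolution \<phi> Xd f k (h, x) \<noteq> 0} \<subseteq> (\<lambda>(a, b). a + b) ` (F \<times> Fk)"
  proof
    fix h assume "h \<in> {h. \<exists>x. convolution \<phi> Xd f k (h, x) \<noteq> 0}"
    then obtain x a where a: "f (a, x) \<noteq> 0" "k (- a + h, \<phi> (- a) x) \<noteq> 0"
      using convolution_nonzero_witness[OF f k] by blast
    moreover have "h = a + (- a + h)" by (simp add: add.assoc[symmetric])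
    ultimately show "h \<in> (\<lambda>(a, b). a + b) ` (F \<times> Fk)" unfolding F_def Fk_def by force
  qed
  then have "finite {h. \<exists>x. convolution \<phi> Xd f k (h, x) \<noteq> 0}"
    using \<open>finite F\<close> \<open>finite Fk\<close> by (meson finite_SigmaI finite_imageI finite_subset)
  moreover have "compact {x. convolution \<phi> Xd f k (h, x) \<noteq> 0}" for h
  proof (rule compact_support_locally_constant[OF lc])
    show "{x. convolution \<phi> Xd f k (h, x) \<noteq> 0} \<subseteq> (\<Union>a\<in>F. {x. f (a, x) \<noteq> 0})"
      unfolding F_def using convolution_nonzero_witness[OF f k] by blast
    show "compact (\<Union>a\<in>F. {x. f (a, x) \<noteq> 0})"
      using \<open>finite F\<close> f unfolding fibrewise_steinberg_def by (blast intro: compact_UN)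
  qed
  ultimately show ?thesis using domain lc unfolding fibrewise_steinberg_def by blast
qed

text \<open>A nonzero value at \<open>(h, x)\<close> with \<open>x \<notin> V\<close> would need \<open>f\<close> to be
  nonzero above \<open>\<phi> (- a) x\<close>, which lies outside \<open>V\<close> by invariance.\<close>
lemma fibrewise_steinberg_convolution_left:
  fixes a f :: "'g \<times> 'x \<Rightarrow> 'k::field"
  assumes a: "fibrewise_steinberg Xd UNIV a" and f: "fibrewise_steinberg Xd V f"
    and "invariant_set \<phi> Xd V"
  shows "fibrewise_steinberg Xd V (convolution \<phi> Xd a f)"
proof (rule fibrewise_steinberg_restrict)
  have fU: "fibrewise_steinberg Xd UNIV f" using f by (rule fibrewise_steinberg_mono) simp
  then show "fibrewise_steinberg Xd UNIV (convolution \<phi> Xd a f)"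
    using a by (rule fibrewise_steinberg_convolution[rotated])
  fix h x assume "x \<notin> V"
  show "convolution \<phi> Xd a f (h, x) = 0"
  proof (rule ccontr)
    assume "convolution \<phi> Xd a f (h, x) \<noteq> 0"
    then obtain c where "a (c, x) \<noteq> 0" "f (- c + h, \<phi> (- c) x) \<noteq> 0"
      using convolution_nonzero_witness[OF a fU] by blast
    then have "x \<in> Xd c" "\<phi> (- c) x \<in> V"
      using fibrewise_steinberg_domain[OF a] fibrewise_steinberg_domain[OF f] by blast+
    then show False
      using invariant_set_act_inverse_iff[OF assms(3)] \<open>x \<notin> V\<close> by blast
  qed
qed

lemma fibrewise_steinberg_convolution_right:
  fixes a f :: "'g \<times> 'x \<Rightarrow> 'k::field"
  assumes a: "fibrewise_steinberg Xd UNIV a" and f: "fibrewise_steinberg Xd V f"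
  shows "fibrewise_steinberg Xd V (convolution \<phi> Xd f a)"
proof (rule fibrewise_steinberg_restrict)
  have fU: "fibrewise_steinberg Xd UNIV f" using f by (rule fibrewise_steinberg_mono) simp
  then show "fibrewise_steinberg Xd UNIV (convolution \<phi> Xd f a)"
    using a by (rule fibrewise_steinberg_convolution)
  fix h x assume "x \<notin> V"
  then show "convolution \<phi> Xd f a (h, x) = 0"
    using convolution_nonzero_witness[OF fU a] fibrewise_steinberg_domain[OF f] by blast
qed

end

lemma graded_ideal_steinberg:
  fixes \<phi> :: "'g::group_add \<Rightarrow> 'x::t2_space \<Rightarrow> 'x"
  assumes "partial_action \<phi> Xd" "open V" "invariant_set \<phi> Xd V"
  shows "graded_ideal \<phi> Xd (steinberg Xd V :: ('g \<times> 'x \<Rightarrow> 'k::field) set)"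
proof -
  interpret partial_action_system \<phi> Xd by unfold_locales fact
  have V: "f \<in> steinberg Xd V \<longleftrightarrow> fibrewise_steinberg Xd V f" for f :: "'g \<times> 'x \<Rightarrow> 'k"
    using steinberg_iff_fibrewise open_domain \<open>open V\<close> by blast
  have U: "f \<in> steinberg Xd UNIV \<longleftrightarrow> fibrewise_steinberg Xd UNIV f" for f :: "'g \<times> 'x \<Rightarrow> 'k"
    using steinberg_iff_fibrewise open_domain by blast
  have "(steinberg Xd V :: ('g \<times> 'x \<Rightarrow> 'k) set) \<subseteq> steinberg Xd UNIV"
    using fibrewise_steinberg_mono[of Xd V _ UNIV] by (auto simp: V U)
  moreover have "(\<lambda>_. 0 :: 'k) \<in> steinberg Xd V"
    by (simp add: V fibrewise_steinberg_zero)
  moreover have "\<forall>f\<in>steinberg Xd V. \<forall>k\<in>steinberg Xd V. (\<lambda>\<gamma>. f \<gamma> + k \<gamma> :: 'k) \<in> steinberg Xd V"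
    by (simp add: V fibrewise_steinberg_add)
  moreover have "\<forall>f\<in>steinberg Xd V. (\<lambda>\<gamma>. - f \<gamma> :: 'k) \<in> steinberg Xd V"
    by (simp add: V fibrewise_steinberg_uminus)
  moreover have "\<forall>f\<in>steinberg Xd V. \<forall>a\<in>steinberg Xd UNIV.
      convolution \<phi> Xd a f \<in> steinberg Xd V \<and> (convolution \<phi> Xd f a :: 'g \<times> 'x \<Rightarrow> 'k) \<in> steinberg Xd V"
    using assms(3)
    by (simp add: V U fibrewise_steinberg_convolution_left fibrewise_steinberg_convolution_right)
  moreover have "\<forall>f\<in>steinberg Xd V. \<forall>g. (hom_component g f :: 'g \<times> 'x \<Rightarrow> 'k) \<in> steinberg Xd V"
    by (simp add: V fibrewise_steinberg_hom_component)
  ultimately show ?thesis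
    unfolding graded_ideal_def steinberg_ideal_def by (intro conjI)
qed

lemma fibrewise_steinberg_inverse:
  assumes "fibrewise_steinberg Xd V f"
  shows "fibrewise_steinberg Xd V (\<lambda>\<gamma>. inverse (f \<gamma>) :: 'k::field)"
  using assms locally_constant_comp[of "\<lambda>x. f (_, x)" inverse]
  unfolding fibrewise_steinberg_def by simp

lemma sum_hom_components:
  assumes "finite {g. \<exists>x. f (g, x) \<noteq> 0}"
  shows "(\<lambda>\<gamma>. \<Sum>g\<in>{g. \<exists>x. f (g, x) \<noteq> 0}. hom_component g f \<gamma>) = (f :: 'g \<times> 'x \<Rightarrow> 'k::comm_monoid_add)"
proof
  fix \<gamma> :: "'g \<times> 'x"
  obtain h x where \<gamma>: "\<gamma> = (h, x)" by (cases \<gamma>)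
  have "(\<Sum>g\<in>{g. \<exists>x. f (g, x) \<noteq> 0}. hom_component g f (h, x)) =
      (\<Sum>g\<in>{g. \<exists>x. f (g, x) \<noteq> 0}. if h = g then f (h, x) else 0)"
    unfolding hom_component_def by simp
  also have "\<dots> = f (h, x)" using assms by auto
  finally show "(\<Sum>g\<in>{g. \<exists>x. f (g, x) \<noteq> 0}. hom_component g f \<gamma>) = f \<gamma>" using \<gamma> by simp
qed

context partial_action_system
begin

lemma convolution_char_fun_zero:
  "convolution \<phi> Xd (char_fun 0 S) (char_fun 0 T) = (char_fun 0 (S \<inter> T) :: 'g \<times> 'x \<Rightarrow> 'k::field)"
proof
  fix \<gamma> :: "'g \<times> 'x"
  obtain h x where \<gamma>: "\<gamma> = (h, x)" by (cases \<gamma>)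
  have "convolution \<phi> Xd (char_fun 0 S) (char_fun 0 T) (h, x) =
      char_fun 0 S (0 :: 'g, x) * (char_fun 0 T (- 0 + h, \<phi> (- 0) x) :: 'k)"
    by (rule convolution_homogeneous_left) (auto simp: domain_zero split: if_splits)
  then show "convolution \<phi> Xd (char_fun 0 S) (char_fun 0 T) \<gamma> = (char_fun 0 (S \<inter> T) \<gamma> :: 'k)"
    using \<gamma> by (simp add: act_zero)
qed


lemma convolution_char_fun_right_unit:
  fixes f :: "'g \<times> 'x \<Rightarrow> 'k::field"
  assumes f: "fibrewise_steinberg Xd V f" and S: "\<phi> (- g) ` {x. f (g, x) \<noteq> 0} \<subseteq> S"
  shows "convolution \<phi> Xd (hom_component g f) (char_fun 0 S) = hom_component g f"
proof
  fix \<gamma> :: "'g \<times> 'x"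
  obtain h x where \<gamma>: "\<gamma> = (h, x)" by (cases \<gamma>)
  have "convolution \<phi> Xd (hom_component g f) (char_fun 0 S) (h, x) =
      hom_component g f (g, x) * char_fun 0 S (- g + h, \<phi> (- g) x)"
  proof (rule convolution_homogeneous_left)
    show "b = g \<and> y \<in> Xd g" if "hom_component g f (b, y) \<noteq> 0" for b y
      using that fibrewise_steinberg_domain[OF f, of b y]
      by (auto simp: hom_component_def split: if_splits)
    show "y \<in> Xd b" if "(char_fun 0 S (b, y) :: 'k) \<noteq> 0" for b y
      using that by (auto simp: domain_zero split: if_splits)
  qed
  also have "\<dots> = hom_component g f (h, x)"
  proof (cases "h = g \<and> f (g, x) \<noteq> 0")
    case True
    then show ?thesis using S by (auto simp: hom_component_def)
  next
    case False
    moreover have "- g + h = 0 \<Longrightarrow> h = g" using minus_unique[of "- g" h] by simp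
    ultimately show ?thesis by (auto simp: hom_component_def)
  qed
  finally show "convolution \<phi> Xd (hom_component g f) (char_fun 0 S) \<gamma> = hom_component g f \<gamma>"
    using \<gamma> by simp
qed

end

section \<open>Graded ideals and open invariant sets\<close>

definition unit_support :: "('g::zero \<times> 'x \<Rightarrow> 'k::zero) set \<Rightarrow> 'x set" where
  "unit_support I = {x. \<exists>f\<in>I. f (0, x) \<noteq> 0}"

locale ample_partial_action = partial_action_system \<phi> Xd
  for \<phi> :: "'g::group_add \<Rightarrow> 'x::t2_space \<Rightarrow> 'x" and Xd +
  assumes locally_compact: "locally_compact_space (euclidean :: 'x topology)"
    and totally_disconnected: "totally_disconnected_space TYPE('x)"
begin

lemma steinberg_iff_fibrewise_open:
  "open V \<Longrightarrow> f \<in> steinberg Xd V \<longleftrightarrow> fibrewise_steinberg Xd V (f :: 'g \<times> 'x \<Rightarrow> 'k::field)"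
  using steinberg_iff_fibrewise open_domain by blast

lemma subset_if_steinberg_subset:
  assumes "open V" "open W" "(steinberg Xd V :: ('g \<times> 'x \<Rightarrow> 'k::field) set) \<subseteq> steinberg Xd W"
  shows "V \<subseteq> W"
proof
  fix x assume "x \<in> V"
  obtain C where C: "compact C" "open C" "x \<in> C" "C \<subseteq> V"
    by (rule compact_open_nbhd[OF locally_compact totally_disconnected \<open>open V\<close> \<open>x \<in> V\<close>])
  then have "C \<subseteq> V \<inter> Xd 0" by (simp add: domain_zero)
  with C(1,2) have "fibrewise_steinberg Xd V (char_fun 0 C :: 'g \<times> 'x \<Rightarrow> 'k)"
    by (rule fibrewise_steinberg_char_fun)
  then have "(char_fun 0 C :: 'g \<times> 'x \<Rightarrow> 'k) \<in> steinberg Xd W"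
    using assms(3) unfolding subset_iff steinberg_iff_fibrewise_open[OF assms(1)] by blast
  then have "fibrewise_steinberg Xd W (char_fun 0 C :: 'g \<times> 'x \<Rightarrow> 'k)"
    using steinberg_iff_fibrewise_open[OF assms(2)] by blast
  moreover have "(char_fun 0 C :: 'g \<times> 'x \<Rightarrow> 'k) (0, x) \<noteq> 0" using C(3) by simp
  ultimately have "x \<in> W \<inter> Xd 0" by (rule fibrewise_steinberg_domain)
  then show "x \<in> W" by simp
qed

lemma inj_on_steinberg: "inj_on (\<lambda>V. steinberg Xd V :: ('g \<times> 'x \<Rightarrow> 'k::field) set) {V. open V}"
proof (rule inj_onI)
  fix V W assume "V \<in> {V. open V}" "W \<in> {V. open V}"
    and eq: "(steinberg Xd V :: ('g \<times> 'x \<Rightarrow> 'k) set) = steinberg Xd W"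
  then have "open V" "open W" by simp_all
  then show "V = W"
    using subset_if_steinberg_subset[of V W] subset_if_steinberg_subset[of W V] eq by blast
qed

end

locale ample_graded_ideal = ample_partial_action \<phi> Xd
  for \<phi> :: "'g::group_add \<Rightarrow> 'x::t2_space \<Rightarrow> 'x" and Xd +
  fixes I :: "('g \<times> 'x \<Rightarrow> 'k::field) set"
  assumes graded_ideal: "graded_ideal \<phi> Xd I"
begin

lemma ideal_fibrewise: "f \<in> I \<Longrightarrow> fibrewise_steinberg Xd UNIV f"
  using graded_ideal steinberg_iff_fibrewise_open[of UNIV f]
  unfolding graded_ideal_def steinberg_ideal_def by blast

lemma ideal_zero: "(\<lambda>_. 0) \<in> I"
  using graded_ideal unfolding graded_ideal_def steinberg_ideal_def by blast

lemma ideal_add: "f \<in> I \<Longrightarrow> k \<in> I \<Longrightarrow> (\<lambda>\<gamma>. f \<gamma> + k \<gamma>) \<in> I"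
  using graded_ideal unfolding graded_ideal_def steinberg_ideal_def by blast

lemma ideal_diff: "f \<in> I \<Longrightarrow> k \<in> I \<Longrightarrow> (\<lambda>\<gamma>. f \<gamma> - k \<gamma>) \<in> I"
  using graded_ideal ideal_add[of f "\<lambda>\<gamma>. - k \<gamma>"]
  unfolding graded_ideal_def steinberg_ideal_def by simp

lemma ideal_sum: "finite F \<Longrightarrow> (\<And>g. g \<in> F \<Longrightarrow> u g \<in> I) \<Longrightarrow> (\<lambda>\<gamma>. \<Sum>g\<in>F. u g \<gamma>) \<in> I"
proof (induction F rule: finite_induct)
  case empty
  then show ?case using ideal_zero by simp
next
  case (insert b B)
  then show ?case using ideal_add[of "u b" "\<lambda>\<gamma>. \<Sum>g\<in>B. u g \<gamma>"] by simp
qed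

lemma ideal_hom_component: "f \<in> I \<Longrightarrow> hom_component g f \<in> I"
  using graded_ideal unfolding graded_ideal_def by blast

lemma ideal_convolution_left: "f \<in> I \<Longrightarrow> fibrewise_steinberg Xd UNIV a \<Longrightarrow> convolution \<phi> Xd a f \<in> I"
  using graded_ideal steinberg_iff_fibrewise_open[of UNIV a]
  unfolding graded_ideal_def steinberg_ideal_def by blast

lemma ideal_convolution_right: "f \<in> I \<Longrightarrow> fibrewise_steinberg Xd UNIV a \<Longrightarrow> convolution \<phi> Xd f a \<in> I"
  using graded_ideal steinberg_iff_fibrewise_open[of UNIV a]
  unfolding graded_ideal_def steinberg_ideal_def by blast

end

context ample_graded_ideal
begin

text \<open>Convolving with the characteristic function of a compact open neighbourhood of
  \<open>\<phi> (- g) x\<close> in degree \<open>- g\<close> moves the value \<open>f (g, x)\<close> to the unit \<open>(0, x)\<close>.\<close>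
lemma mem_unit_support:
  assumes f: "f \<in> I" and nonzero: "f (g, x) \<noteq> 0"
  shows "x \<in> unit_support I"
proof -
  have x: "x \<in> Xd g"
    using fibrewise_steinberg_domain[OF ideal_fibrewise[OF f] nonzero] by simp
  obtain C where C: "compact C" "open C" "\<phi> (- g) x \<in> C" "C \<subseteq> Xd (- g)"
    by (rule compact_open_nbhd[OF locally_compact totally_disconnected open_domain
          act_inverse_in_domain[OF x]])
  then have "fibrewise_steinberg Xd UNIV (char_fun (- g) C :: 'g \<times> 'x \<Rightarrow> 'k)"
    by (intro fibrewise_steinberg_char_fun) auto
  then have in_I: "convolution \<phi> Xd (hom_component g f) (char_fun (- g) C) \<in> I"
    by (rule ideal_convolution_right[OF ideal_hom_component[OF f]])
  have "convolution \<phi> Xd (hom_component g f) (char_fun (- g) C) (0, x) =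
      hom_component g f (g, x) * char_fun (- g) C (- g + 0, \<phi> (- g) x)"
  proof (rule convolution_homogeneous_left)
    show "b = g \<and> y \<in> Xd g" if "hom_component g f (b, y) \<noteq> 0" for b y
      using that fibrewise_steinberg_domain[OF ideal_fibrewise[OF f], of b y]
      by (auto simp: hom_component_def split: if_splits)
    show "y \<in> Xd b" if "(char_fun (- g) C (b, y) :: 'k) \<noteq> 0" for b y
      using that C(4) by (auto split: if_splits)
  qed
  also have "\<dots> = f (g, x)" using C(3) by (simp add: hom_component_def)
  finally have "convolution \<phi> Xd (hom_component g f) (char_fun (- g) C) (0, x) \<noteq> 0"
    using nonzero by simp
  with in_I show ?thesis unfolding unit_support_def by blast
qed

lemma open_unit_support: "open (unit_support I)"
proof -
  have "unit_support I = (\<Union>f\<in>I. (\<lambda>x. f (0, x)) -` (- {0}))"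
    unfolding unit_support_def by auto
  moreover have "locally_constant (\<lambda>x. f (0, x))" if "f \<in> I" for f
    using ideal_fibrewise[OF that] unfolding fibrewise_steinberg_def by blast
  ultimately show ?thesis by (simp add: open_UN open_vimage_locally_constant)
qed

lemma invariant_unit_support: "invariant_set \<phi> Xd (unit_support I)"
  unfolding invariant_set_def
proof (intro allI subsetI)
  fix g z assume "z \<in> \<phi> (- g) ` (Xd g \<inter> unit_support I)"
  then obtain x f where x: "x \<in> Xd g" "z = \<phi> (- g) x" and f: "f \<in> I" "f (0, x) \<noteq> 0"
    unfolding unit_support_def by blast
  have z: "z \<in> Xd (- g)" using act_inverse_in_domain[OF x(1)] x(2) by simp
  obtain C where C: "compact C" "open C" "z \<in> C" "C \<subseteq> Xd (- g)"
    by (rule compact_open_nbhd[OF locally_compact totally_disconnected open_domain z])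
  then have "fibrewise_steinberg Xd UNIV (char_fun (- g) C :: 'g \<times> 'x \<Rightarrow> 'k)"
    by (intro fibrewise_steinberg_char_fun) auto
  then have in_I: "convolution \<phi> Xd (char_fun (- g) C) f \<in> I"
    by (rule ideal_convolution_left[OF f(1)])
  have "convolution \<phi> Xd (char_fun (- g) C) f (- g, z) =
      char_fun (- g) C (- g, z) * f (- (- g) + - g, \<phi> (- (- g)) z)"
  proof (rule convolution_homogeneous_left)
    show "b = - g \<and> y \<in> Xd (- g)" if "(char_fun (- g) C (b, y) :: 'k) \<noteq> 0" for b y
      using that C(4) by (auto split: if_splits)
    show "y \<in> Xd b" if "f (b, y) \<noteq> 0" for b y
      using fibrewise_steinberg_domain[OF ideal_fibrewise[OF f(1)] that] by simp
  qed
  also have "\<dots> = f (0, x)" using C(3) x act_act_inverse[OF x(1)] by simp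
  finally have "convolution \<phi> Xd (char_fun (- g) C) f (- g, z) \<noteq> 0"
    using f(2) by simp
  then have "z \<in> unit_support I" by (rule mem_unit_support[OF in_I])
  with z show "z \<in> Xd (- g) \<inter> unit_support I" by simp
qed

lemma ideal_subset_steinberg: "I \<subseteq> steinberg Xd (unit_support I)"
proof
  fix f assume f: "f \<in> I"
  have "fibrewise_steinberg Xd (unit_support I) f"
    by (rule fibrewise_steinberg_restrict[OF ideal_fibrewise[OF f]]) (use mem_unit_support[OF f] in blast)
  then show "f \<in> steinberg Xd (unit_support I)"
    using steinberg_iff_fibrewise_open[OF open_unit_support] by blast
qed

text \<open>Since \<open>inverse 0 = 0\<close> in Isabelle, the pointwise inverse of the unit part of \<open>f\<close> is again in
  the algebra; convolving it with \<open>f\<close> yields the characteristic function of the support.\<close>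
lemma char_fun_support_in_ideal:
  assumes f: "f \<in> I"
  shows "char_fun 0 {z. f (0, z) \<noteq> 0} \<in> I"
proof -
  define c where "c = hom_component 0 (\<lambda>\<gamma>. inverse (f \<gamma>))"
  have "fibrewise_steinberg Xd UNIV c"
    unfolding c_def
    by (intro fibrewise_steinberg_hom_component fibrewise_steinberg_inverse ideal_fibrewise f)
  then have "hom_component 0 (convolution \<phi> Xd c f) \<in> I"
    by (intro ideal_hom_component ideal_convolution_left f)
  moreover have "convolution \<phi> Xd c f (h, z) = c (0, z) * f (- 0 + h, \<phi> (- 0) z)" for h z
  proof (rule convolution_homogeneous_left)
    show "b = 0 \<and> y \<in> Xd 0" if "c (b, y) \<noteq> 0" for b y
      using that by (auto simp: c_def hom_component_def domain_zero split: if_splits)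
    show "y \<in> Xd b" if "f (b, y) \<noteq> 0" for b y
      using fibrewise_steinberg_domain[OF ideal_fibrewise[OF f] that] by simp
  qed
  then have "hom_component 0 (convolution \<phi> Xd c f) = char_fun 0 {z. f (0, z) \<noteq> 0}"
    by (auto simp: hom_component_def c_def act_zero)
  ultimately show ?thesis by simp
qed

lemma char_fun_Un_in_ideal:
  assumes "char_fun 0 S \<in> I" "char_fun 0 T \<in> I"
  shows "char_fun 0 (S \<union> T) \<in> I"
proof -
  have "convolution \<phi> Xd (char_fun 0 S) (char_fun 0 T) \<in> I"
    using assms by (intro ideal_convolution_right ideal_fibrewise)
  then have "(\<lambda>\<gamma>. char_fun 0 S \<gamma> + char_fun 0 T \<gamma> - char_fun 0 (S \<inter> T) \<gamma>) \<in> I"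
    using assms by (simp add: convolution_char_fun_zero ideal_add ideal_diff)
  moreover have "(\<lambda>\<gamma>. char_fun 0 S \<gamma> + char_fun 0 T \<gamma> - char_fun 0 (S \<inter> T) \<gamma>) =
      (char_fun 0 (S \<union> T) :: 'g \<times> 'x \<Rightarrow> 'k)"
    by (auto simp: char_fun_def)
  ultimately show ?thesis by simp
qed

lemma char_fun_Union_in_ideal:
  "finite \<T> \<Longrightarrow> (\<And>S. S \<in> \<T> \<Longrightarrow> char_fun 0 S \<in> I) \<Longrightarrow> char_fun 0 (\<Union>\<T>) \<in> I"
proof (induction \<T> rule: finite_induct)
  case empty
  have "(char_fun 0 {} :: 'g \<times> 'x \<Rightarrow> 'k) = (\<lambda>_. 0)" by (auto simp: char_fun_def)
  then show ?case using ideal_zero by simp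
next
  case (insert S \<T>)
  then show ?case using char_fun_Un_in_ideal[of S "\<Union>\<T>"] by simp
qed

lemma local_unit_in_ideal:
  assumes "compact C" "C \<subseteq> unit_support I"
  obtains S where "C \<subseteq> S" "char_fun 0 S \<in> I"
proof -
  let ?\<U> = "(\<lambda>f. {z. f (0, z) \<noteq> 0}) ` I"
  have "C \<subseteq> \<Union>?\<U>" using assms(2) unfolding unit_support_def by blast
  moreover have "open U" if U: "U \<in> ?\<U>" for U
  proof -
    obtain f where "f \<in> I" "U = (\<lambda>z. f (0, z)) -` (- {0})" using U by blast
    then show ?thesis
      using ideal_fibrewise open_vimage_locally_constant
      unfolding fibrewise_steinberg_def by blast
  qed
  ultimately obtain \<T> where "\<T> \<subseteq> ?\<U>" "finite \<T>" "C \<subseteq> \<Union>\<T>"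
    using compactE[OF assms(1)] by metis
  moreover have "char_fun 0 S \<in> I" if "S \<in> \<T>" for S
    using that \<open>\<T> \<subseteq> ?\<U>\<close> char_fun_support_in_ideal by blast
  ultimately show ?thesis using that char_fun_Union_in_ideal by blast
qed

text \<open>Invariance puts the compact set of sources of the support of \<open>f\<close> inside the unit support,
  where \<open>I\<close> contains a local unit.\<close>
lemma hom_component_in_ideal:
  assumes "f \<in> steinberg Xd (unit_support I)"
  shows "hom_component g f \<in> I"
proof -
  have f: "fibrewise_steinberg Xd (unit_support I) f"
    using assms steinberg_iff_fibrewise_open[OF open_unit_support] by blast
  define K where "K = {x. f (g, x) \<noteq> 0}"
  have K: "compact K" "K \<subseteq> unit_support I \<inter> Xd g"
    using f unfolding fibrewise_steinberg_def K_def by blast+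
  have "compact (\<phi> (- g) ` K)"
    using K by (intro compact_continuous_image continuous_on_subset[OF continuous_on_act_inverse]) auto
  moreover have "\<phi> (- g) ` K \<subseteq> unit_support I"
    using K(2) invariant_unit_support unfolding invariant_set_def by blast
  ultimately obtain S where S: "\<phi> (- g) ` K \<subseteq> S" "char_fun 0 S \<in> I"
    by (rule local_unit_in_ideal)
  have "fibrewise_steinberg Xd UNIV (hom_component g f)"
    by (rule fibrewise_steinberg_hom_component[OF fibrewise_steinberg_mono[OF f subset_UNIV]])
  then have "convolution \<phi> Xd (hom_component g f) (char_fun 0 S) \<in> I"
    by (rule ideal_convolution_left[OF S(2)])
  moreover have "convolution \<phi> Xd (hom_component g f) (char_fun 0 S) = hom_component g f"
    using S(1) unfolding K_def by (rule convolution_char_fun_right_unit[OF f])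
  ultimately show ?thesis by simp
qed

lemma steinberg_unit_support: "steinberg Xd (unit_support I) = I"
proof
  show "steinberg Xd (unit_support I) \<subseteq> I"
  proof
    fix f :: "'g \<times> 'x \<Rightarrow> 'k" assume f: "f \<in> steinberg Xd (unit_support I)"
    then have "finite {g. \<exists>x. f (g, x) \<noteq> 0}"
      using steinberg_iff_fibrewise_open[OF open_unit_support] fibrewise_steinberg_def by blast
    then have "(\<lambda>\<gamma>. \<Sum>g\<in>{g. \<exists>x. f (g, x) \<noteq> 0}. hom_component g f \<gamma>) \<in> I"
      using hom_component_in_ideal[OF f] by (intro ideal_sum)
    then show "f \<in> I" using sum_hom_components[OF \<open>finite _\<close>] by simp
  qed
qed (rule ideal_subset_steinberg)

end

theorem mainTheorem11:
  fixes \<phi> :: "'g::group_add \<Rightarrow> 'x::t2_space \<Rightarrow> 'x"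
    and Xd :: "'g \<Rightarrow> 'x set"
  assumes "locally_compact_space (euclidean :: 'x topology)"
    and "totally_disconnected_space TYPE('x)"
    and "partial_action \<phi> Xd"
    and "\<forall>g. closed (Xd g)"
  shows "bij_betw (\<lambda>V. steinberg Xd V :: ('g \<times> 'x \<Rightarrow> 'k::field) set)
           {V. open V \<and> invariant_set \<phi> Xd V}
           {I. graded_ideal \<phi> Xd I}"
proof (rule bij_betw_imageI)
  interpret ample_partial_action \<phi> Xd
    by unfold_locales (fact assms)+
  show "inj_on (\<lambda>V. steinberg Xd V :: ('g \<times> 'x \<Rightarrow> 'k) set) {V. open V \<and> invariant_set \<phi> Xd V}"
    by (rule inj_on_subset[OF inj_on_steinberg]) blast
  show "(\<lambda>V. steinberg Xd V :: ('g \<times> 'x \<Rightarrow> 'k) set) ` {V. open V \<and> invariant_set \<phi> Xd V} =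
      {I. graded_ideal \<phi> Xd I}"
  proof (intro equalityI subsetI)
    fix I assume "I \<in> (\<lambda>V. steinberg Xd V :: ('g \<times> 'x \<Rightarrow> 'k) set) ` {V. open V \<and> invariant_set \<phi> Xd V}"
    then show "I \<in> {I. graded_ideal \<phi> Xd I}"
      using graded_ideal_steinberg[OF assms(3)] by blast
  next
    fix I :: "('g \<times> 'x \<Rightarrow> 'k) set" assume "I \<in> {I. graded_ideal \<phi> Xd I}"
    then interpret ample_graded_ideal \<phi> Xd I
      by unfold_locales simp
    show "I \<in> (\<lambda>V. steinberg Xd V) ` {V. open V \<and> invariant_set \<phi> Xd V}"
      using open_unit_support invariant_unit_support steinberg_unit_support by blast
  qed
qed

end
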